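(* Let $d\ge 1$, let $H$ be a $d\times d$ complex matrix that is both Hermitian and unitary, let $m\ge 1$ be an integer and let $\tau>0$. On $(\mathbb{C}^d)^{\otimes m}$ let $H_{\|}(m)=\sum_{i=1}^m H[i]$ and $H_{\#}(m)=H^{\otimes m}$, where $H[i]=I^{\otimes (i-1)}\otimes H\otimes I^{\otimes (m-i)}$. For $X\in\{\|,\#\}$ define the implementation time $$T_X=\inf\Big\{t\ge 0:\ \exists\,\lambda\in\mathbb{R},\ \exists\,\varphi\in\mathbb{R}\ \text{with}\ p\big(\lambda H_X(m)\big)\le\tau\ \text{and}\ e^{-it\lambda H_X(m)}=e^{i\varphi}H^{\otimes m}\Big\},$$ i.e. the least time needed to implement the $m$ parallel gates $H^{\otimes m}$ (up to global phase) by evolving under a rescaling of $H_X(m)$ whose energy spread is at most $\tau$. Then implementing the $m$ gates using the standard parallel Hamiltonian is $m$ times slower than using the coherent one: $T_{\|}=m\,T_{\#}$.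
   Context: For a Hermitian operator $A$ on a finite-dimensional Hilbert space, $p(A)=h_{\max}-h_{\min}$, where $h_{\max}$ and $h_{\min}$ are the largest and smallest eigenvalues of $A$. The quantity $p$ of the Hamiltonian is the energetic resource that is held fixed (bounded by $\tau$) when comparing implementations. *)

theory Defs
  imports "Jordan_Normal_Form.Char_Poly"
begin

definition adj :: "complex mat \<Rightarrow> complex mat" where
  "adj A = mat (dim_col A) (dim_row A) (\<lambda>(i,j). cnj (A $$ (j,i)))"

definition hermitian_mat :: "complex mat \<Rightarrow> bool" where
  "hermitian_mat A \<longleftrightarrow> dim_row A = dim_col A \<and> adj A = A"

definition unitary_mat :: "complex mat \<Rightarrow> bool" where
  "unitary_mat A \<longleftrightarrow> dim_row A = dim_col A \<and> A * adj A = 1\<^sub>m (dim_row A)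
     \<and> adj A * A = 1\<^sub>m (dim_row A)"

definition kron :: "complex mat \<Rightarrow> complex mat \<Rightarrow> complex mat" where
  "kron A B = mat (dim_row A * dim_row B) (dim_col A * dim_col B)
     (\<lambda>(i,j). A $$ (i div dim_row B, j div dim_col B) * B $$ (i mod dim_row B, j mod dim_col B))"

fun tpow :: "complex mat \<Rightarrow> nat \<Rightarrow> complex mat" where
  "tpow A 0 = 1\<^sub>m 1"
| "tpow A (Suc k) = kron A (tpow A k)"

definition local_op :: "complex mat \<Rightarrow> nat \<Rightarrow> nat \<Rightarrow> complex mat" where
  "local_op H m i = kron (kron (tpow (1\<^sub>m (dim_row H)) (i - 1)) H) (tpow (1\<^sub>m (dim_row H)) (m - i))"

definition H_par :: "complex mat \<Rightarrow> nat \<Rightarrow> complex mat" where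
  "H_par H m = mat (dim_row H ^ m) (dim_row H ^ m)
     (\<lambda>ij. \<Sum>i=1..m. local_op H m i $$ ij)"

definition H_coh :: "complex mat \<Rightarrow> nat \<Rightarrow> complex mat" where
  "H_coh H m = tpow H m"

definition mexp :: "complex mat \<Rightarrow> complex mat" where
  "mexp M = mat (dim_row M) (dim_col M) (\<lambda>(i,j). \<Sum>k. (M ^\<^sub>m k) $$ (i,j) / of_nat (fact k))"

text \<open>p(A) = h_max - h_min (eigenvalues of a Hermitian matrix are real).\<close>
definition spread :: "complex mat \<Rightarrow> real" where
  "spread A = Max (Re ` {k. eigenvalue A k}) - Min (Re ` {k. eigenvalue A k})"

definition impl_time :: "complex mat \<Rightarrow> complex mat \<Rightarrow> nat \<Rightarrow> real \<Rightarrow> real" where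
  "impl_time Hx H m \<tau> = Inf {t::real. t \<ge> 0 \<and> (\<exists>(l::real) (\<phi>::real).
      spread (complex_of_real l \<cdot>\<^sub>m Hx) \<le> \<tau> \<and>
      mexp ((- (\<i> * complex_of_real t * complex_of_real l)) \<cdot>\<^sub>m Hx) = exp (\<i> * complex_of_real \<phi>) \<cdot>\<^sub>m tpow H m)}"

end

theory Submission
  imports Defs
begin

(* Since H is Hermitian and unitary, H * H = 1, so P = (1 + H)/2 and Q = (1 - H)/2 are complementary
   projections with H P = P and H Q = -Q. Expanding 1 = (P + Q)^(x)m shows that the tensor products
   R_1 (x) ... (x) R_m with every R_i in {P, Q} add up to the identity; if k of the factors are Q, such a
   product is an eigen-matrix of H^(x)m with eigenvalue (-1)^k and of H_par with eigenvalue m - 2k.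
   So for both Hamiltonians, writing r k for the eigenvalue on the products with k factors Q,
   exp (-i t l H_X) = e^(i phi) H^(x)m holds iff exp (-i t l r k) = e^(i phi) (-1)^k for all k, and the
   spread of l H_X is 2 |l| E where E = max |r k|. Comparing k = 0 with k = 1, where r drops by 2,
   forces t |l| >= pi/2, hence t >= pi E / tau, with equality for l = tau / (2 E). Now E = m for H_par
   and E = 1 for H^(x)m. In the degenerate case H = +-1 both implementation times are 0. *)

lemma sum_mult_div_mod:
  assumes "(e::nat) > 0"
  shows "(\<Sum>k\<in>{0..<b*e}. f (k div e) (k mod e)) = (\<Sum>i\<in>{0..<b}. \<Sum>j\<in>{0..<e}. f i j)"
proof (induction b)
  case 0 then show ?case by simp
next
  case (Suc b)
  have "{0..<Suc b * e} = {0..<b*e} \<union> {b*e..<b*e+e}" by (auto simp: ivl_disj_un_two)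
  then have "(\<Sum>k\<in>{0..<Suc b*e}. f (k div e) (k mod e))
      = (\<Sum>k\<in>{0..<b*e}. f (k div e) (k mod e)) + (\<Sum>k\<in>{b*e..<b*e+e}. f (k div e) (k mod e))"
    by (simp add: sum.union_disjoint)
  also have "(\<Sum>k\<in>{b*e..<b*e+e}. f (k div e) (k mod e)) = (\<Sum>j\<in>{0..<e}. f ((j + b*e) div e) ((j+b*e) mod e))"
    using sum.shift_bounds_nat_ivl[of "\<lambda>k. f (k div e) (k mod e)" 0 "b*e" e] by (simp add: add.commute)
  also have "\<dots> = (\<Sum>j\<in>{0..<e}. f b j)"
    using assms by simp
  finally show ?case using Suc.IH by (simp add: sum.atLeast0_lessThan_Suc)
qed

lemma mod_mult_div_eq_div_mod: "((i::nat) mod (b * c)) div c = (i div c) mod b"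
proof (cases "c = 0")
  case False
  have "i mod (b*c) = c * (i div c mod b) + i mod c" using mod_mult2_eq[of i c b] by (simp add: mult.commute)
  then show ?thesis using False by simp
qed simp

lemma smult_smult_mat: "(x::'a::semigroup_mult) \<cdot>\<^sub>m (y \<cdot>\<^sub>m A) = (x * y) \<cdot>\<^sub>m A"
  by (rule eq_matI) (simp_all add: mult.assoc)

lemma one_smult_mat: "(1::'a::monoid_mult) \<cdot>\<^sub>m A = A"
  by (rule eq_matI) simp_all

lemma smult_mult_mat_vec:
  assumes "(A::'a::comm_semiring_0 mat) \<in> carrier_mat n k" and "v \<in> carrier_vec k"
  shows "(a \<cdot>\<^sub>m A) *\<^sub>v v = a \<cdot>\<^sub>v (A *\<^sub>v v)"
  using assms by (intro eq_vecI) (auto simp: scalar_prod_def sum_distrib_left mult.assoc)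

subsection \<open>Kronecker products\<close>

lemma dim_kron[simp]:
  "dim_row (kron A B) = dim_row A * dim_row B" "dim_col (kron A B) = dim_col A * dim_col B"
  by (auto simp: kron_def)

lemma kron_carrier_mat[simp,intro]:
  "A \<in> carrier_mat a b \<Longrightarrow> B \<in> carrier_mat c e \<Longrightarrow> kron A B \<in> carrier_mat (a*c) (b*e)"
  unfolding carrier_mat_def by simp

lemma index_kron[simp]:
  "i < dim_row A * dim_row B \<Longrightarrow> j < dim_col A * dim_col B \<Longrightarrow>
   kron A B $$ (i,j) = A $$ (i div dim_row B, j div dim_col B) * B $$ (i mod dim_row B, j mod dim_col B)"
  by (simp add: kron_def)

lemma kron_mult_kron:
  assumes A: "A \<in> carrier_mat a b" and B: "B \<in> carrier_mat c e"
    and C: "C \<in> carrier_mat b f" and D: "D \<in> carrier_mat e g"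
    and pos: "c > 0" "e > 0" "g > 0"
  shows "kron A B * kron C D = kron (A * C) (B * D)"
proof -
  note dims = carrier_matD[OF A] carrier_matD[OF B] carrier_matD[OF C] carrier_matD[OF D]
  show ?thesis
  proof (rule eq_matI)
    fix i j assume "i < dim_row (kron (A * C) (B * D))" and "j < dim_col (kron (A * C) (B * D))"
    then have i: "i < a * c" and j: "j < f * g" using dims by simp_all
    have quot: "i div c < a" "j div g < f"
      using i j pos by (simp_all add: less_mult_imp_div_less mult.commute)
    have "(kron A B * kron C D) $$ (i,j) = (\<Sum>k\<in>{0..<b*e}. kron A B $$ (i,k) * kron C D $$ (k,j))"
      using dims i j by (simp add: scalar_prod_def)
    also have "\<dots> = (\<Sum>k\<in>{0..<b*e}. (\<lambda>k1 k2. A $$ (i div c, k1) * B $$ (i mod c, k2)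
        * (C $$ (k1, j div g) * D $$ (k2, j mod g))) (k div e) (k mod e))"
      using dims i j by (intro sum.cong) (simp_all add: ac_simps)
    also have "\<dots> = (\<Sum>k1\<in>{0..<b}. \<Sum>k2\<in>{0..<e}. A $$ (i div c, k1) * B $$ (i mod c, k2)
        * (C $$ (k1, j div g) * D $$ (k2, j mod g)))"
      by (rule sum_mult_div_mod[OF pos(2)])
    also have "\<dots> = (\<Sum>k1\<in>{0..<b}. A $$ (i div c, k1) * C $$ (k1, j div g))
        * (\<Sum>k2\<in>{0..<e}. B $$ (i mod c, k2) * D $$ (k2, j mod g))"
      by (simp only: sum_product) (simp add: ac_simps)
    also have "\<dots> = kron (A * C) (B * D) $$ (i,j)"
      using dims i j quot pos by (simp add: scalar_prod_def)
    finally show "(kron A B * kron C D) $$ (i,j) = kron (A * C) (B * D) $$ (i,j)" .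
  qed (simp_all add: dims)
qed

lemma kron_smult_left: "kron (x \<cdot>\<^sub>m A) B = x \<cdot>\<^sub>m kron A B"
proof (rule eq_matI)
  fix i j assume "i < dim_row (x \<cdot>\<^sub>m kron A B)" "j < dim_col (x \<cdot>\<^sub>m kron A B)"
  then have ij: "i < dim_row A * dim_row B" "j < dim_col A * dim_col B" by simp_all
  then have "i div dim_row B < dim_row A" "j div dim_col B < dim_col A"
    by (simp_all add: less_mult_imp_div_less)
  then show "kron (x \<cdot>\<^sub>m A) B $$ (i, j) = (x \<cdot>\<^sub>m kron A B) $$ (i, j)" using ij by simp
qed simp_all

lemma kron_smult_right: "kron A (x \<cdot>\<^sub>m B) = x \<cdot>\<^sub>m kron A B"
proof (rule eq_matI)
  fix i j assume "i < dim_row (x \<cdot>\<^sub>m kron A B)" "j < dim_col (x \<cdot>\<^sub>m kron A B)"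
  then have ij: "i < dim_row A * dim_row B" "j < dim_col A * dim_col B" by simp_all
  then have "dim_row B > 0" "dim_col B > 0" by (rule_tac ccontr, simp)+
  then have "i mod dim_row B < dim_row B" "j mod dim_col B < dim_col B" by simp_all
  then show "kron A (x \<cdot>\<^sub>m B) $$ (i, j) = (x \<cdot>\<^sub>m kron A B) $$ (i, j)" using ij by simp
qed simp_all

lemma add_kron:
  assumes "A \<in> carrier_mat a b" "B \<in> carrier_mat a b" "C \<in> carrier_mat c e" "c > 0" "e > 0"
  shows "kron (A + B) C = kron A C + kron B C"
proof (rule eq_matI)
  fix i j assume "i < dim_row (kron A C + kron B C)" "j < dim_col (kron A C + kron B C)"
  then have ij: "i < a * c" "j < b * e" using assms by simp_all
  then have "i div c < a" "j div e < b" using assms(4,5) by (simp_all add: less_mult_imp_div_less)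
  then show "kron (A + B) C $$ (i, j) = (kron A C + kron B C) $$ (i, j)"
    using ij assms by (simp add: algebra_simps)
qed (use assms in simp_all)

lemma kron_add:
  assumes "A \<in> carrier_mat a b" "B \<in> carrier_mat c e" "C \<in> carrier_mat c e" "c > 0" "e > 0"
  shows "kron A (B + C) = kron A B + kron A C"
proof (rule eq_matI)
  fix i j assume "i < dim_row (kron A B + kron A C)" "j < dim_col (kron A B + kron A C)"
  then have ij: "i < a * c" "j < b * e" using assms by simp_all
  then show "kron A (B + C) $$ (i, j) = (kron A B + kron A C) $$ (i, j)"
    using assms by (simp add: algebra_simps)
qed (use assms in simp_all)

lemma kron_one_one: assumes "(b::nat) > 0" shows "kron (1\<^sub>m a) (1\<^sub>m b) = 1\<^sub>m (a * b)"
proof (rule eq_matI)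
  fix i j assume "i < dim_row (1\<^sub>m (a * b) :: complex mat)" "j < dim_col (1\<^sub>m (a * b) :: complex mat)"
  then have ij: "i < a * b" "j < a * b" by simp_all
  then have "i div b < a" "j div b < a" by (simp_all add: less_mult_imp_div_less)
  then have "kron (1\<^sub>m a) (1\<^sub>m b) $$ (i, j) = (if i div b = j div b \<and> i mod b = j mod b then 1 else 0)"
    using ij assms by simp
  moreover have "(i div b = j div b \<and> i mod b = j mod b) = (i = j)"
    by (metis div_mult_mod_eq)
  ultimately show "kron (1\<^sub>m a) (1\<^sub>m b) $$ (i, j) = 1\<^sub>m (a * b) $$ (i, j)"
    using ij by simp
qed simp_all

lemma kron_one_1_left: "kron (1\<^sub>m 1) A = A"
  by (rule eq_matI) simp_all

lemma kron_assoc: "kron (kron A B) C = kron A (kron B C)"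
proof (rule eq_matI)
  fix i j assume "i < dim_row (kron A (kron B C))" and "j < dim_col (kron A (kron B C))"
  then have i: "i < dim_row A * dim_row B * dim_row C" and j: "j < dim_col A * dim_col B * dim_col C"
    by (simp_all add: mult.assoc)
  have pos: "dim_row C > 0" "dim_row B > 0" "dim_col C > 0" "dim_col B > 0"
    using i j by (rule_tac ccontr, simp)+
  have "i div dim_row C < dim_row A * dim_row B" "j div dim_col C < dim_col A * dim_col B"
    using i j by (simp_all add: less_mult_imp_div_less)
  moreover have "i mod (dim_row B * dim_row C) < dim_row B * dim_row C"
    "j mod (dim_col B * dim_col C) < dim_col B * dim_col C" using pos by simp_all
  moreover have "i div (dim_row B * dim_row C) = i div dim_row C div dim_row B"
    "j div (dim_col B * dim_col C) = j div dim_col C div dim_col B"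
    by (metis div_mult2_eq mult.commute)+
  moreover have "i mod (dim_row B * dim_row C) div dim_row C = i div dim_row C mod dim_row B"
    "j mod (dim_col B * dim_col C) div dim_col C = j div dim_col C mod dim_col B"
    by (simp_all only: mod_mult_div_eq_div_mod)
  moreover have "i mod (dim_row B * dim_row C) mod dim_row C = i mod dim_row C"
    "j mod (dim_col B * dim_col C) mod dim_col C = j mod dim_col C"
    by (simp_all add: mod_mod_cancel)
  ultimately show "kron (kron A B) C $$ (i, j) = kron A (kron B C) $$ (i, j)"
    using i j pos by (simp del: mod_mult2_eq div_mult2_eq add: mult.assoc)
qed (simp_all add: mult.assoc)

lemma tpow_carrier_mat: "A \<in> carrier_mat d d \<Longrightarrow> tpow A m \<in> carrier_mat (d^m) (d^m)"
  by (induction m) auto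

lemma tpow_one: "d > 0 \<Longrightarrow> tpow (1\<^sub>m d) m = 1\<^sub>m (d^m)"
  by (induction m) (simp_all add: kron_one_one)

lemma tpow_smult: "tpow (x \<cdot>\<^sub>m A) m = x^m \<cdot>\<^sub>m tpow A m"
  by (induction m) (simp_all add: one_smult_mat kron_smult_left kron_smult_right smult_smult_mat mult.commute)

definition has_nonzero_entry :: "complex mat \<Rightarrow> bool" where
  "has_nonzero_entry X \<longleftrightarrow> (\<exists>i<dim_row X. \<exists>j<dim_col X. X $$ (i,j) \<noteq> 0)"

lemma has_nonzero_entry_kron:
  assumes "has_nonzero_entry A" "has_nonzero_entry B"
  shows "has_nonzero_entry (kron A B)"
proof -
  obtain i1 j1 where 1: "i1 < dim_row A" "j1 < dim_col A" "A $$ (i1,j1) \<noteq> 0"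
    using assms(1) unfolding has_nonzero_entry_def by blast
  obtain i2 j2 where 2: "i2 < dim_row B" "j2 < dim_col B" "B $$ (i2,j2) \<noteq> 0"
    using assms(2) unfolding has_nonzero_entry_def by blast
  have "i1 * dim_row B + i2 < (i1 + 1) * dim_row B" "j1 * dim_col B + j2 < (j1 + 1) * dim_col B"
    using 2 by simp_all
  moreover have "(i1 + 1) * dim_row B \<le> dim_row A * dim_row B" "(j1 + 1) * dim_col B \<le> dim_col A * dim_col B"
    using 1 by (metis Suc_eq_plus1 Suc_leI mult_le_mono1)+
  ultimately have lt: "i1 * dim_row B + i2 < dim_row A * dim_row B" "j1 * dim_col B + j2 < dim_col A * dim_col B"
    by linarith+
  then have "kron A B $$ (i1 * dim_row B + i2, j1 * dim_col B + j2) = A $$ (i1,j1) * B $$ (i2,j2)"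
    using 2 by simp
  then have "kron A B $$ (i1 * dim_row B + i2, j1 * dim_col B + j2) \<noteq> 0" using 1 2 by simp
  then show ?thesis unfolding has_nonzero_entry_def dim_kron using lt by blast
qed

lemma smult_mat_cancel:
  assumes "a \<cdot>\<^sub>m X = b \<cdot>\<^sub>m X" "has_nonzero_entry X"
  shows "a = (b::complex)"
proof -
  obtain i j where ij: "i < dim_row X" "j < dim_col X" "X $$ (i,j) \<noteq> 0"
    using assms(2) unfolding has_nonzero_entry_def by blast
  then have "a * X $$ (i,j) = b * X $$ (i,j)" using assms(1) by (metis index_smult_mat(1))
  then show ?thesis using ij(3) by simp
qed

lemma H_par_carrier_mat: "H \<in> carrier_mat d d \<Longrightarrow> H_par H m \<in> carrier_mat (d^m) (d^m)"
  by (simp add: H_par_def carrier_matD)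

lemma local_op_carrier_mat:
  assumes "H \<in> carrier_mat d d" "1 \<le> i" "i \<le> m"
  shows "local_op H m i \<in> carrier_mat (d^m) (d^m)"
proof -
  have "m = (i - 1) + 1 + (m - i)" using assms(2,3) by simp
  then have "d ^ m = d ^ (i - 1) * d * d ^ (m - i)" by (metis power_add power_one_right)
  moreover have "local_op H m i \<in> carrier_mat (d ^ (i - 1) * d * d ^ (m - i)) (d ^ (i - 1) * d * d ^ (m - i))"
    unfolding local_op_def using assms(1) by (intro kron_carrier_mat tpow_carrier_mat) (simp_all add: carrier_matD)
  ultimately show ?thesis by simp
qed

lemma local_op_Suc_1:
  assumes "H \<in> carrier_mat d d" "d > 0"
  shows "local_op H (Suc m) 1 = kron H (1\<^sub>m (d^m))"
  using assms unfolding local_op_def by (simp add: carrier_matD kron_one_1_left[simplified] tpow_one)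

lemma local_op_Suc_Suc:
  assumes "H \<in> carrier_mat d d" "1 \<le> i"
  shows "local_op H (Suc m) (Suc i) = kron (1\<^sub>m d) (local_op H m i)"
proof -
  obtain k where "i = Suc k" using assms(2) by (cases i) simp_all
  then show ?thesis using assms(1) unfolding local_op_def by (simp add: carrier_matD kron_assoc)
qed

lemma H_par_0: "H_par H 0 = 0\<^sub>m 1 1"
  by (rule eq_matI) (simp_all add: H_par_def)

lemma H_par_Suc:
  assumes H: "H \<in> carrier_mat d d" and d: "d > 0"
  shows "H_par H (Suc m) = kron H (1\<^sub>m (d^m)) + kron (1\<^sub>m d) (H_par H m)"
proof (rule eq_matI)
  have Hpar: "H_par H m \<in> carrier_mat (d^m) (d^m)" by (rule H_par_carrier_mat[OF H])
  fix a b assume "a < dim_row (kron H (1\<^sub>m (d^m)) + kron (1\<^sub>m d) (H_par H m))"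
    and "b < dim_col (kron H (1\<^sub>m (d^m)) + kron (1\<^sub>m d) (H_par H m))"
  then have ab: "a < d * d^m" "b < d * d^m" using H Hpar by (simp_all add: carrier_matD)
  have "H_par H (Suc m) $$ (a,b) = (\<Sum>i=1..Suc m. local_op H (Suc m) i $$ (a,b))"
    using ab H unfolding H_par_def by (simp add: carrier_matD)
  also have "\<dots> = local_op H (Suc m) 1 $$ (a,b) + (\<Sum>i=1..m. local_op H (Suc m) (Suc i) $$ (a,b))"
    by (simp only: sum.atLeast_Suc_atMost[of 1] sum.shift_bounds_cl_Suc_ivl)
  also have "(\<Sum>i=1..m. local_op H (Suc m) (Suc i) $$ (a,b))
      = (\<Sum>i=1..m. 1\<^sub>m d $$ (a div d^m, b div d^m) * local_op H m i $$ (a mod d^m, b mod d^m))"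
  proof (rule sum.cong[OF refl])
    fix i assume "i \<in> {1..m}"
    then show "local_op H (Suc m) (Suc i) $$ (a,b)
        = 1\<^sub>m d $$ (a div d^m, b div d^m) * local_op H m i $$ (a mod d^m, b mod d^m)"
      using ab local_op_carrier_mat[OF H, of i m] local_op_Suc_Suc[OF H]
      by (simp add: carrier_matD)
  qed
  also have "\<dots> = kron (1\<^sub>m d) (H_par H m) $$ (a,b)"
    using ab Hpar d H by (simp add: H_par_def carrier_matD sum_distrib_left)
  finally show "H_par H (Suc m) $$ (a,b) = (kron H (1\<^sub>m (d^m)) + kron (1\<^sub>m d) (H_par H m)) $$ (a,b)"
    using ab H Hpar local_op_Suc_1[OF H d] by (simp add: carrier_matD)
qed (use H in \<open>simp_all add: H_par_def carrier_matD\<close>)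

subsection \<open>The matrix exponential on eigen-matrices\<close>

lemma pow_mat_mult_eigen:
  assumes A: "(A::complex mat) \<in> carrier_mat n n" and X: "X \<in> carrier_mat n k" and AX: "A * X = \<mu> \<cdot>\<^sub>m X"
  shows "(A ^\<^sub>m j) * X = (\<mu> ^ j) \<cdot>\<^sub>m X"
proof (induction j)
  case 0
  have "A ^\<^sub>m 0 = 1\<^sub>m n" using A by (simp add: carrier_matD)
  then show ?case using X by (simp add: one_smult_mat carrier_matD)
next
  case (Suc j)
  have Aj: "A ^\<^sub>m j \<in> carrier_mat n n" by (rule pow_carrier_mat[OF A])
  have "(A ^\<^sub>m Suc j) * X = A ^\<^sub>m j * (A * X)" using Aj A X by (simp only: pow_mat.simps assoc_mult_mat)
  also have "\<dots> = \<mu> \<cdot>\<^sub>m (A ^\<^sub>m j * X)" unfolding AX using Aj X by (rule mult_smult_distrib)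
  also have "\<dots> = (\<mu> ^ Suc j) \<cdot>\<^sub>m X" unfolding Suc.IH by (simp only: smult_smult_mat power_Suc)
  finally show ?case .
qed

lemma norm_pow_mat_entry_le:
  assumes A: "(A::complex mat) \<in> carrier_mat n n" and il: "i < n" "l < n"
  shows "norm ((A ^\<^sub>m j) $$ (i,l)) \<le> (real n * (\<Sum>i<n. \<Sum>l<n. norm (A $$ (i,l)))) ^ j"
  using il(2)
proof (induction j arbitrary: l)
  case 0
  then show ?case using A il(1) by (simp add: carrier_matD)
next
  case (Suc j)
  define B where "B = (\<Sum>i<n. \<Sum>l<n. norm (A $$ (i,l)))"
  have entry_le: "norm (A $$ (r,l)) \<le> B" if "r < n" for r
  proof -
    have "norm (A $$ (r,l)) \<le> (\<Sum>l<n. norm (A $$ (r,l)))" using that Suc.prems by (intro member_le_sum) simp_all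
    also have "\<dots> \<le> B" unfolding B_def using that
      by (intro member_le_sum[where f="\<lambda>r. \<Sum>l<n. norm (A $$ (r,l))"]) (simp_all add: sum_nonneg)
    finally show ?thesis .
  qed
  have Aj: "A ^\<^sub>m j \<in> carrier_mat n n" by (rule pow_carrier_mat[OF A])
  have "(A ^\<^sub>m Suc j) $$ (i,l) = (\<Sum>r\<in>{0..<n}. (A ^\<^sub>m j) $$ (i,r) * A $$ (r,l))"
    using A Aj il(1) Suc.prems by (simp add: carrier_matD scalar_prod_def)
  then have "norm ((A ^\<^sub>m Suc j) $$ (i,l)) \<le> (\<Sum>r\<in>{0..<n}. norm ((A ^\<^sub>m j) $$ (i,r)) * norm (A $$ (r,l)))"
    by (metis (no_types, lifting) norm_mult norm_sum sum.cong)
  also have "\<dots> \<le> (\<Sum>r\<in>{0..<n}. (real n * B) ^ j * B)"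
  proof (rule sum_mono)
    fix r assume "r \<in> {0..<n}"
    then show "norm ((A ^\<^sub>m j) $$ (i,r)) * norm (A $$ (r,l)) \<le> (real n * B) ^ j * B"
      using Suc.IH[of r] entry_le[of r] unfolding B_def by (intro mult_mono) (simp_all add: sum_nonneg)
  qed
  also have "\<dots> = (real n * B) ^ Suc j" by simp
  finally show ?case unfolding B_def .
qed

lemma summable_mexp_entry:
  assumes A: "(A::complex mat) \<in> carrier_mat n n" and il: "i < n" "l < n"
  shows "summable (\<lambda>j. (A ^\<^sub>m j) $$ (i,l) / of_nat (fact j))"
proof -
  define C where "C = real n * (\<Sum>i<n. \<Sum>l<n. norm (A $$ (i,l)))"
  have "norm ((A ^\<^sub>m j) $$ (i,l) / of_nat (fact j)) \<le> inverse (fact j) * C ^ j" for j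
  proof -
    have "norm ((A ^\<^sub>m j) $$ (i,l) / of_nat (fact j)) = norm ((A ^\<^sub>m j) $$ (i,l)) / fact j"
      by (simp add: norm_divide)
    also have "\<dots> \<le> C ^ j / fact j"
      using norm_pow_mat_entry_le[OF A il] unfolding C_def by (intro divide_right_mono) simp_all
    finally show ?thesis by (simp add: divide_inverse mult.commute)
  qed
  then show ?thesis using summable_exp[of C] by (rule summable_comparison_test'[rotated])
qed

lemma exp_series_sums: "(\<lambda>j. x ^ j / of_nat (fact j)) sums exp (x::complex)"
  using exp_converges[of x] by (simp add: scaleR_conv_of_real divide_inverse mult.commute)

lemma mexp_carrier_mat: assumes "A \<in> carrier_mat n n" shows "mexp A \<in> carrier_mat n n"
  using assms unfolding mexp_def carrier_mat_def by simp

lemma mexp_mult_eigen: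
  assumes A: "A \<in> carrier_mat n n" and X: "X \<in> carrier_mat n k" and AX: "A * X = \<mu> \<cdot>\<^sub>m X"
  shows "mexp A * X = exp \<mu> \<cdot>\<^sub>m X"
proof (rule eq_matI)
  fix i c assume "i < dim_row (exp \<mu> \<cdot>\<^sub>m X)" "c < dim_col (exp \<mu> \<cdot>\<^sub>m X)"
  then have ic: "i < n" "c < k" using X by (simp_all add: carrier_matD)
  have summable: "summable (\<lambda>j. (A ^\<^sub>m j) $$ (i,l) / of_nat (fact j) * X $$ (l,c))" if "l < n" for l
    using summable_mult2[OF summable_mexp_entry[OF A ic(1) that]] by simp
  have "(mexp A * X) $$ (i,c) = (\<Sum>l\<in>{0..<n}. mexp A $$ (i,l) * X $$ (l,c))"
    using A X ic by (simp add: mexp_def carrier_matD scalar_prod_def)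
  also have "\<dots> = (\<Sum>l\<in>{0..<n}. \<Sum>j. (A ^\<^sub>m j) $$ (i,l) / of_nat (fact j) * X $$ (l,c))"
    using A ic summable_mexp_entry[OF A ic(1)]
    by (intro sum.cong) (simp_all add: mexp_def carrier_matD suminf_mult2)
  also have "\<dots> = (\<Sum>j. \<Sum>l\<in>{0..<n}. (A ^\<^sub>m j) $$ (i,l) / of_nat (fact j) * X $$ (l,c))"
    using summable by (intro suminf_sum[symmetric]) simp
  also have "\<dots> = (\<Sum>j. ((A ^\<^sub>m j) * X) $$ (i,c) / of_nat (fact j))"
    using A X ic by (simp add: carrier_matD scalar_prod_def sum_divide_distrib)
  also have "\<dots> = (\<Sum>j. \<mu> ^ j / of_nat (fact j) * X $$ (i,c))"
    unfolding pow_mat_mult_eigen[OF A X AX] using X ic by (simp add: carrier_matD)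
  also have "\<dots> = (exp \<mu> \<cdot>\<^sub>m X) $$ (i,c)"
    using X ic sums_unique[OF exp_series_sums[of \<mu>]] suminf_mult2[OF sums_summable[OF exp_series_sums]]
    by (simp add: carrier_matD mult.commute)
  finally show "(mexp A * X) $$ (i,c) = (exp \<mu> \<cdot>\<^sub>m X) $$ (i,c)" .
qed (use A X in \<open>simp_all add: mexp_def carrier_matD\<close>)

lemma finite_eigenvalues:
  assumes A: "(A::complex mat) \<in> carrier_mat n n"
  shows "finite {k. eigenvalue A k}"
proof -
  have "coeff (char_poly A) n = 1" using degree_monic_char_poly[OF A] by (rule conjunct2)
  then have "char_poly A \<noteq> 0" by auto
  then have "finite {k. poly (char_poly A) k = 0}" by (rule poly_roots_finite)
  moreover have "{k. eigenvalue A k} = {k. poly (char_poly A) k = 0}"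
    using eigenvalue_root_char_poly[OF A] by blast
  ultimately show ?thesis by simp
qed

lemma spread_le:
  assumes A: "(A::complex mat) \<in> carrier_mat n n" and "eigenvalue A \<mu>\<^sub>0"
    and bounds: "\<And>\<mu>. eigenvalue A \<mu> \<Longrightarrow> a \<le> Re \<mu> \<and> Re \<mu> \<le> b"
  shows "spread A \<le> b - a"
proof -
  have fin: "finite (Re ` {k. eigenvalue A k})" using finite_eigenvalues[OF A] by simp
  have ne: "Re ` {k. eigenvalue A k} \<noteq> {}" using assms(2) by blast
  have "Max (Re ` {k. eigenvalue A k}) \<le> b" using fin ne bounds by (simp add: Max_le_iff)
  moreover have "a \<le> Min (Re ` {k. eigenvalue A k})" using fin ne bounds by (simp add: Min_ge_iff)
  ultimately show ?thesis unfolding spread_def by simp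
qed

lemma spread_ge:
  assumes A: "(A::complex mat) \<in> carrier_mat n n" and "eigenvalue A \<mu>\<^sub>1" "eigenvalue A \<mu>\<^sub>2"
  shows "Re \<mu>\<^sub>1 - Re \<mu>\<^sub>2 \<le> spread A"
proof -
  have fin: "finite (Re ` {k. eigenvalue A k})" using finite_eigenvalues[OF A] by simp
  have "Re \<mu>\<^sub>1 \<le> Max (Re ` {k. eigenvalue A k})" using fin assms(2) by (intro Max_ge) simp_all
  moreover have "Min (Re ` {k. eigenvalue A k}) \<le> Re \<mu>\<^sub>2" using fin assms(3) by (intro Min_le) simp_all
  ultimately show ?thesis unfolding spread_def by simp
qed

lemma eigenvalue_if_mult_eigen:
  assumes A: "A \<in> carrier_mat n n" and X: "X \<in> carrier_mat n k"
    and AX: "A * X = \<mu> \<cdot>\<^sub>m X" and nonzero: "has_nonzero_entry X"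
  shows "eigenvalue A \<mu>"
proof -
  obtain i j where ij: "i < n" "j < k" "X $$ (i,j) \<noteq> 0"
    using nonzero X unfolding has_nonzero_entry_def by auto
  have "col X j $ i \<noteq> 0\<^sub>v n $ i" using ij X by simp
  then have "col X j \<noteq> 0\<^sub>v n" by metis
  moreover have "A *\<^sub>v col X j = col (A * X) j" by (rule col_mult2[OF A X ij(2), symmetric])
  then have "A *\<^sub>v col X j = \<mu> \<cdot>\<^sub>v col X j" unfolding AX using X ij by (intro eq_vecI) auto
  ultimately show ?thesis
    using A X unfolding eigenvalue_def eigenvector_def by (intro exI[of _ "col X j"]) auto
qed

lemma eigenvalue_zero_smult_iff:
  assumes A: "(A::complex mat) \<in> carrier_mat n n" and "n > 0"
  shows "eigenvalue (0 \<cdot>\<^sub>m A) \<mu> \<longleftrightarrow> \<mu> = 0"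
proof
  assume "eigenvalue (0 \<cdot>\<^sub>m A) \<mu>"
  then obtain v where v: "v \<in> carrier_vec n" "v \<noteq> 0\<^sub>v n" "(0 \<cdot>\<^sub>m A) *\<^sub>v v = \<mu> \<cdot>\<^sub>v v"
    using A unfolding eigenvalue_def eigenvector_def by auto
  obtain i where i: "i < n" "v $ i \<noteq> 0" using v(1,2) by (metis carrier_vecD eq_vecI index_zero_vec)
  have "((0 \<cdot>\<^sub>m A) *\<^sub>v v) $ i = 0" using A v(1) i by (simp add: scalar_prod_def)
  then have "\<mu> * v $ i = 0" using v(1,3) i by (metis carrier_vecD index_smult_vec(1))
  then show "\<mu> = 0" using i by simp
next
  assume "\<mu> = 0"
  have "(0 \<cdot>\<^sub>m A) * 1\<^sub>m n = 0 \<cdot>\<^sub>m 1\<^sub>m n" using A by (intro eq_matI) auto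
  moreover have "has_nonzero_entry (1\<^sub>m n)"
    using assms(2) unfolding has_nonzero_entry_def by (intro exI[of _ 0] conjI) auto
  ultimately show "eigenvalue (0 \<cdot>\<^sub>m A) \<mu>"
    using A \<open>\<mu> = 0\<close> by (intro eigenvalue_if_mult_eigen) auto
qed

lemma spread_zero_smult:
  assumes "(A::complex mat) \<in> carrier_mat n n" and "n > 0"
  shows "spread (0 \<cdot>\<^sub>m A) = 0"
  using assms spread_le[of "0 \<cdot>\<^sub>m A" n 0 0 0] spread_ge[of "0 \<cdot>\<^sub>m A" n 0 0]
  by (simp add: eigenvalue_zero_smult_iff)

subsection \<open>Spectral decomposition of an involution\<close>

definition two_sided_eigen :: "complex mat \<Rightarrow> complex mat \<Rightarrow> complex \<Rightarrow> bool" where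
  "two_sided_eigen A X \<mu> \<longleftrightarrow> A * X = \<mu> \<cdot>\<^sub>m X \<and> X * A = \<mu> \<cdot>\<^sub>m X"

lemma two_sided_eigen_one: "X \<in> carrier_mat n n \<Longrightarrow> two_sided_eigen (1\<^sub>m n) X 1"
  by (simp add: two_sided_eigen_def one_smult_mat)

lemma two_sided_eigen_add:
  assumes "A \<in> carrier_mat n n" "B \<in> carrier_mat n n" "X \<in> carrier_mat n n"
    and "two_sided_eigen A X \<alpha>" "two_sided_eigen B X \<beta>"
  shows "two_sided_eigen (A + B) X (\<alpha> + \<beta>)"
  using assms unfolding two_sided_eigen_def
  by (simp add: add_mult_distrib_mat mult_add_distrib_mat add_smult_distrib_right_mat)

lemma two_sided_eigen_kron:
  assumes A: "A \<in> carrier_mat a a" and B: "B \<in> carrier_mat b b"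
    and R: "R \<in> carrier_mat a a" and X: "X \<in> carrier_mat b b" and b: "b > 0"
    and "two_sided_eigen A R \<alpha>" "two_sided_eigen B X \<beta>"
  shows "two_sided_eigen (kron A B) (kron R X) (\<alpha> * \<beta>)"
  using assms kron_mult_kron[OF A B R X b b b] kron_mult_kron[OF R X A B b b b]
  unfolding two_sided_eigen_def by (simp add: kron_smult_left kron_smult_right smult_smult_mat mult.commute)

text \<open>Finite sums of matrices are modelled by an additive closure: complex mat has no
  dimension-free zero, so sum is not available.\<close>

inductive_set add_closure :: "complex mat set \<Rightarrow> complex mat set" for F where
  base: "X \<in> F \<Longrightarrow> X \<in> add_closure F"
| add: "A \<in> add_closure F \<Longrightarrow> B \<in> add_closure F \<Longrightarrow> A + B \<in> add_closure F"

lemma add_closure_carrier_mat: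
  assumes "F \<subseteq> carrier_mat n n" "C \<in> add_closure F"
  shows "C \<in> carrier_mat n n"
  using assms(2) by induction (use assms(1) in auto)

lemma add_closure_mult_eq:
  assumes F: "F \<subseteq> carrier_mat n n" and U: "U \<in> carrier_mat n n" and V: "V \<in> carrier_mat n n"
    and eq: "\<And>X. X \<in> F \<Longrightarrow> U * X = V * X" and C: "C \<in> add_closure F"
  shows "U * C = V * C"
  using C
proof induction
  case (add A B)
  then have "A \<in> carrier_mat n n" "B \<in> carrier_mat n n" using add_closure_carrier_mat[OF F] by blast+
  then show ?case using add.IH U V by (simp add: mult_add_distrib_mat)
qed (rule eq)

lemma add_closure_mult_vec_eq_0:
  assumes F: "F \<subseteq> carrier_mat n n" and v: "v \<in> carrier_vec n"
    and eq: "\<And>X. X \<in> F \<Longrightarrow> X *\<^sub>v v = 0\<^sub>v n" and C: "C \<in> add_closure F"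
  shows "C *\<^sub>v v = 0\<^sub>v n"
  using C
proof induction
  case (add A B)
  then have "A \<in> carrier_mat n n" "B \<in> carrier_mat n n" using add_closure_carrier_mat[OF F] by blast+
  then show ?case using add.IH v by (simp add: add_mult_distrib_mat_vec)
qed (rule eq)

lemma hermitian_unitary_square:
  assumes "H \<in> carrier_mat d d" "hermitian_mat H" "unitary_mat H"
  shows "H * H = 1\<^sub>m d"
  using assms unfolding hermitian_mat_def unitary_mat_def by (metis carrier_matD(1))

locale involution =
  fixes H :: "complex mat" and d :: nat
  assumes H_carrier: "H \<in> carrier_mat d d" and dim_pos: "d > 0" and H_square: "H * H = 1\<^sub>m d"
begin

definition eig_proj :: "complex \<Rightarrow> complex mat" where
  "eig_proj s = (1/2) \<cdot>\<^sub>m (1\<^sub>m d + s \<cdot>\<^sub>m H)"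

abbreviation "P \<equiv> eig_proj 1"
abbreviation "Q \<equiv> eig_proj (-1)"

lemma eig_proj_carrier: "eig_proj s \<in> carrier_mat d d"
  unfolding eig_proj_def using H_carrier by simp

lemma P_add_Q: "P + Q = 1\<^sub>m d"
  using H_carrier by (intro eq_matI) (auto simp: eig_proj_def field_simps)

lemma two_sided_eigen_eig_proj:
  assumes s: "s * s = 1"
  shows "two_sided_eigen H (eig_proj s) s"
proof -
  have sH: "s \<cdot>\<^sub>m H \<in> carrier_mat d d" using H_carrier by simp
  have "H + s \<cdot>\<^sub>m 1\<^sub>m d = s \<cdot>\<^sub>m (1\<^sub>m d + s \<cdot>\<^sub>m H)"
    using H_carrier s by (intro eq_matI) (auto simp: algebra_simps mult.assoc[symmetric])
  moreover have "H * (1\<^sub>m d + s \<cdot>\<^sub>m H) = H + s \<cdot>\<^sub>m 1\<^sub>m d"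
    using mult_add_distrib_mat[OF H_carrier one_carrier_mat sH] mult_smult_distrib[OF H_carrier H_carrier]
      H_carrier H_square by simp
  moreover have "(1\<^sub>m d + s \<cdot>\<^sub>m H) * H = H + s \<cdot>\<^sub>m 1\<^sub>m d"
    using add_mult_distrib_mat[OF one_carrier_mat sH H_carrier] mult_smult_assoc_mat[OF H_carrier H_carrier]
      H_carrier H_square by simp
  moreover have M: "1\<^sub>m d + s \<cdot>\<^sub>m H \<in> carrier_mat d d" using sH by simp
  ultimately show ?thesis
    unfolding two_sided_eigen_def eig_proj_def
    by (simp add: mult_smult_distrib[OF H_carrier M] mult_smult_assoc_mat[OF M H_carrier]
        smult_smult_mat mult.commute)
qed

lemma scalar_if_eig_proj_zero:
  assumes s: "s * s = 1" and zero: "\<not> has_nonzero_entry (eig_proj s)"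
  shows "H = (- s) \<cdot>\<^sub>m 1\<^sub>m d"
proof (rule eq_matI)
  fix i j assume "i < dim_row ((- s) \<cdot>\<^sub>m 1\<^sub>m d)" "j < dim_col ((- s) \<cdot>\<^sub>m 1\<^sub>m d)"
  then have ij: "i < d" "j < d" by simp_all
  then have "eig_proj s $$ (i,j) = 0" using zero eig_proj_carrier unfolding has_nonzero_entry_def
    by (metis carrier_matD)
  then have "s * ((if i = j then 1 else 0) + s * H $$ (i,j)) = 0"
    using ij H_carrier by (simp add: eig_proj_def)
  then show "H $$ (i,j) = ((- s) \<cdot>\<^sub>m 1\<^sub>m d) $$ (i,j)"
    using ij s by (simp add: algebra_simps mult.assoc[symmetric] add_eq_0_iff)
qed (use H_carrier in auto)

lemma two_sided_eigen_kron_eig_proj: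
  assumes s: "s * s = 1" and X: "X \<in> carrier_mat (d^m) (d^m)"
    and coh: "two_sided_eigen (tpow H m) X g" and par: "two_sided_eigen (H_par H m) X e"
  shows "two_sided_eigen (tpow H (Suc m)) (kron (eig_proj s) X) (s * g)"
    and "two_sided_eigen (H_par H (Suc m)) (kron (eig_proj s) X) (s + e)"
proof -
  note R = eig_proj_carrier[of s] and R_eig = two_sided_eigen_eig_proj[OF s]
  have pos: "d^m > 0" using dim_pos by simp
  show "two_sided_eigen (tpow H (Suc m)) (kron (eig_proj s) X) (s * g)"
    using two_sided_eigen_kron[OF H_carrier tpow_carrier_mat[OF H_carrier] R X pos R_eig coh] by simp
  have "two_sided_eigen (kron H (1\<^sub>m (d^m))) (kron (eig_proj s) X) (s * 1)"
    by (rule two_sided_eigen_kron[OF H_carrier one_carrier_mat R X pos R_eig two_sided_eigen_one[OF X]])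
  moreover have "two_sided_eigen (kron (1\<^sub>m d) (H_par H m)) (kron (eig_proj s) X) (1 * e)"
    by (rule two_sided_eigen_kron[OF one_carrier_mat H_par_carrier_mat[OF H_carrier] R X pos
          two_sided_eigen_one[OF R] par])
  ultimately show "two_sided_eigen (H_par H (Suc m)) (kron (eig_proj s) X) (s + e)"
    using two_sided_eigen_add[of _ "d * d^m"] H_carrier R X H_par_carrier_mat[OF H_carrier, of m]
    unfolding H_par_Suc[OF H_carrier dim_pos] by (simp add: kron_carrier_mat)
qed

text \<open>Pairs (R_1 \<otimes> ... \<otimes> R_m, number of indices i with R_i = Q), where every R_i is P or Q.\<close>

fun proj_products :: "nat \<Rightarrow> (complex mat \<times> nat) set" where
  "proj_products 0 = {(1\<^sub>m 1, 0)}"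
| "proj_products (Suc m) =
    (\<lambda>(X, k). (kron P X, k)) ` proj_products m \<union> (\<lambda>(X, k). (kron Q X, Suc k)) ` proj_products m"

lemma proj_products_eigen:
  assumes "(X, k) \<in> proj_products m"
  shows "X \<in> carrier_mat (d^m) (d^m) \<and> k \<le> m
    \<and> two_sided_eigen (tpow H m) X ((-1)^k)
    \<and> two_sided_eigen (H_par H m) X (of_nat m - 2 * of_nat k)"
  using assms
proof (induction m arbitrary: X k)
  case 0
  have "0\<^sub>m 1 1 = (0::complex) \<cdot>\<^sub>m 1\<^sub>m 1" by (rule eq_matI) auto
  with 0 show ?case by (simp add: two_sided_eigen_def H_par_0 one_smult_mat)
next
  case (Suc m)
  then obtain X' k' where mem: "(X', k') \<in> proj_products m"
    and "(X = kron P X' \<and> k = k') \<or> (X = kron Q X' \<and> k = Suc k')"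
    by auto
  then obtain s where cases: "X = kron (eig_proj s) X'" "(s = 1 \<and> k = k') \<or> (s = -1 \<and> k = Suc k')"
    by blast
  then have s: "s * s = 1" by auto
  have eq: "(-1)^k = s * (-1)^k'"
    "(of_nat (Suc m) - 2 * of_nat k :: complex) = s + (of_nat m - 2 * of_nat k')"
    using cases(2) by auto
  have "X \<in> carrier_mat (d^Suc m) (d^Suc m)" "k \<le> Suc m"
    using Suc.IH[OF mem] cases eig_proj_carrier by auto
  moreover have "two_sided_eigen (tpow H (Suc m)) X (s * (-1)^k')"
    "two_sided_eigen (H_par H (Suc m)) X (s + (of_nat m - 2 * of_nat k'))"
    using Suc.IH[OF mem] two_sided_eigen_kron_eig_proj[OF s] cases(1) by auto
  ultimately show ?case unfolding eq by blast
qed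

lemma proj_products_carrier: "fst ` proj_products m \<subseteq> carrier_mat (d^m) (d^m)"
  using proj_products_eigen by force

lemma kron_mem_add_closure_proj_products:
  assumes C: "C \<in> add_closure (fst ` proj_products m)" and R: "R = P \<or> R = Q"
  shows "kron R C \<in> add_closure (fst ` proj_products (Suc m))"
  using C
proof induction
  case (base X)
  then obtain k where "(X, k) \<in> proj_products m" by force
  then have "(kron R X, if R = P then k else Suc k) \<in> proj_products (Suc m)"
    using R by force
  then show ?case by (force intro: add_closure.base)
next
  case (add A B)
  then have "A \<in> carrier_mat (d^m) (d^m)" "B \<in> carrier_mat (d^m) (d^m)"
    using add_closure_carrier_mat[OF proj_products_carrier] by blast+
  then have "kron R (A + B) = kron R A + kron R B"
    using R eig_proj_carrier dim_pos by (metis kron_add zero_less_power)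
  then show ?case using add.IH add_closure.add by simp
qed

lemma one_mem_add_closure_proj_products: "1\<^sub>m (d^m) \<in> add_closure (fst ` proj_products m)"
proof (induction m)
  case 0
  then show ?case by (simp add: add_closure.base)
next
  case (Suc m)
  have "1\<^sub>m (d^Suc m) = kron (P + Q) (1\<^sub>m (d^m))"
    using kron_one_one[of "d^m" d] dim_pos by (simp add: P_add_Q)
  also have "\<dots> = kron P (1\<^sub>m (d^m)) + kron Q (1\<^sub>m (d^m))"
    using dim_pos by (intro add_kron[OF eig_proj_carrier eig_proj_carrier one_carrier_mat]) auto
  finally show ?case using kron_mem_add_closure_proj_products[OF Suc.IH] add_closure.add by simp
qed

lemma proj_products_exist: "k \<le> m \<Longrightarrow> \<exists>X. (X, k) \<in> proj_products m"
proof (induction m arbitrary: k)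
  case (Suc m)
  show ?case
  proof (cases "k \<le> m")
    case True
    then obtain X where "(X, k) \<in> proj_products m" using Suc.IH by blast
    then show ?thesis by force
  next
    case False
    then obtain X where "(X, m) \<in> proj_products m" using Suc.IH by blast
    then show ?thesis using False Suc.prems by (intro exI[of _ "kron Q X"]) force
  qed
qed simp

definition has_proj_spectrum :: "nat \<Rightarrow> complex mat \<Rightarrow> (nat \<Rightarrow> real) \<Rightarrow> bool" where
  "has_proj_spectrum m Hx r \<longleftrightarrow> Hx \<in> carrier_mat (d^m) (d^m) \<and>
     (\<forall>X k. (X, k) \<in> proj_products m \<longrightarrow> two_sided_eigen Hx X (complex_of_real (r k)))"

lemma has_proj_spectrum_tpow: "has_proj_spectrum m (tpow H m) (\<lambda>k. (-1)^k)"
  using proj_products_eigen tpow_carrier_mat[OF H_carrier] unfolding has_proj_spectrum_def by auto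

lemma has_proj_spectrum_H_par: "has_proj_spectrum m (H_par H m) (\<lambda>k. real m - 2 * real k)"
  using proj_products_eigen H_par_carrier_mat[OF H_carrier] unfolding has_proj_spectrum_def by auto

lemma smult_mult_proj_product:
  assumes spec: "has_proj_spectrum m Hx r" and mem: "(X, k) \<in> proj_products m"
  shows "(c \<cdot>\<^sub>m Hx) * X = (c * complex_of_real (r k)) \<cdot>\<^sub>m X"
proof -
  have Hx: "Hx \<in> carrier_mat (d^m) (d^m)" and X: "X \<in> carrier_mat (d^m) (d^m)"
    and eig: "Hx * X = complex_of_real (r k) \<cdot>\<^sub>m X"
    using spec proj_products_eigen[OF mem] mem unfolding has_proj_spectrum_def two_sided_eigen_def by auto
  show ?thesis unfolding mult_smult_assoc_mat[OF Hx X] eig by (rule smult_smult_mat)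
qed

lemma mexp_smult_mult_proj_product:
  assumes spec: "has_proj_spectrum m Hx r" and mem: "(X, k) \<in> proj_products m"
  shows "mexp (c \<cdot>\<^sub>m Hx) * X = exp (c * complex_of_real (r k)) \<cdot>\<^sub>m X"
proof (rule mexp_mult_eigen)
  show "c \<cdot>\<^sub>m Hx \<in> carrier_mat (d^m) (d^m)" using spec unfolding has_proj_spectrum_def by simp
  show "X \<in> carrier_mat (d^m) (d^m)" using proj_products_eigen[OF mem] by simp
qed (rule smult_mult_proj_product[OF spec mem])

lemma tpow_mult_proj_product:
  assumes mem: "(X, k) \<in> proj_products m"
  shows "(z \<cdot>\<^sub>m tpow H m) * X = (z * (-1)^k) \<cdot>\<^sub>m X"
proof -
  have X: "X \<in> carrier_mat (d^m) (d^m)" and eig: "tpow H m * X = (-1)^k \<cdot>\<^sub>m X"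
    using proj_products_eigen[OF mem] unfolding two_sided_eigen_def by auto
  show ?thesis
    unfolding mult_smult_assoc_mat[OF tpow_carrier_mat[OF H_carrier] X] eig by (rule smult_smult_mat)
qed

lemma mexp_eq_smult_tpow:
  assumes spec: "has_proj_spectrum m Hx r"
    and phase: "\<And>k. k \<le> m \<Longrightarrow> exp (c * complex_of_real (r k)) = z * (-1)^k"
  shows "mexp (c \<cdot>\<^sub>m Hx) = z \<cdot>\<^sub>m tpow H m"
proof -
  have U: "mexp (c \<cdot>\<^sub>m Hx) \<in> carrier_mat (d^m) (d^m)"
    using spec unfolding has_proj_spectrum_def by (simp add: mexp_carrier_mat)
  have V: "z \<cdot>\<^sub>m tpow H m \<in> carrier_mat (d^m) (d^m)"
    using tpow_carrier_mat[OF H_carrier] by simp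
  have "mexp (c \<cdot>\<^sub>m Hx) * X = (z \<cdot>\<^sub>m tpow H m) * X" if XF: "X \<in> fst ` proj_products m" for X
  proof -
    obtain k where mem: "(X, k) \<in> proj_products m" using XF by force
    then show ?thesis
      using phase proj_products_eigen[OF mem]
      by (simp add: mexp_smult_mult_proj_product[OF spec mem] tpow_mult_proj_product)
  qed
  then have "mexp (c \<cdot>\<^sub>m Hx) * 1\<^sub>m (d^m) = (z \<cdot>\<^sub>m tpow H m) * 1\<^sub>m (d^m)"
    by (rule add_closure_mult_eq[OF proj_products_carrier U V _ one_mem_add_closure_proj_products])
  then show ?thesis unfolding right_mult_one_mat[OF U] right_mult_one_mat[OF V] .
qed

lemma eigenvalue_smult_proj_spectrum:
  assumes spec: "has_proj_spectrum m Hx r" and eig: "eigenvalue (complex_of_real l \<cdot>\<^sub>m Hx) \<mu>"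
  shows "\<exists>k\<le>m. \<mu> = complex_of_real (l * r k)"
proof (rule ccontr)
  assume none: "\<not> (\<exists>k\<le>m. \<mu> = complex_of_real (l * r k))"
  have Hx: "complex_of_real l \<cdot>\<^sub>m Hx \<in> carrier_mat (d^m) (d^m)"
    using spec unfolding has_proj_spectrum_def by simp
  then obtain v where v: "v \<in> carrier_vec (d^m)" "v \<noteq> 0\<^sub>v (d^m)"
    and ev: "(complex_of_real l \<cdot>\<^sub>m Hx) *\<^sub>v v = \<mu> \<cdot>\<^sub>v v"
    using eig unfolding eigenvalue_def eigenvector_def by auto
  \<comment> \<open>Every product kills v, yet the products add up to the identity.\<close>
  have "X *\<^sub>v v = 0\<^sub>v (d^m)" if XF: "X \<in> fst ` proj_products m" for X
  proof -
    obtain k where mem: "(X, k) \<in> proj_products m" using XF by force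
    have X: "X \<in> carrier_mat (d^m) (d^m)" and "k \<le> m" using proj_products_eigen[OF mem] by auto
    then have ne: "complex_of_real (l * r k) \<noteq> \<mu>" using none by auto
    have "Hx \<in> carrier_mat (d^m) (d^m)" and "X * Hx = complex_of_real (r k) \<cdot>\<^sub>m X"
      using spec mem unfolding has_proj_spectrum_def two_sided_eigen_def by auto
    then have "X * (complex_of_real l \<cdot>\<^sub>m Hx) = complex_of_real (l * r k) \<cdot>\<^sub>m X"
      using X by (simp add: mult_smult_distrib smult_smult_mat)
    then have eq: "complex_of_real (l * r k) \<cdot>\<^sub>v (X *\<^sub>v v) = \<mu> \<cdot>\<^sub>v (X *\<^sub>v v)"
      using X Hx v(1) ev by (metis assoc_mult_mat_vec mult_mat_vec smult_mult_mat_vec)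
    have "(X *\<^sub>v v) $ i = 0" if i: "i < d^m" for i
    proof -
      have "complex_of_real (l * r k) * (X *\<^sub>v v) $ i = \<mu> * (X *\<^sub>v v) $ i"
        using arg_cong[OF eq, of "\<lambda>w. w $ i"] i X by simp
      then show ?thesis using ne by simp
    qed
    then show ?thesis using X by (intro eq_vecI) auto
  qed
  then have "1\<^sub>m (d^m) *\<^sub>v v = 0\<^sub>v (d^m)"
    by (rule add_closure_mult_vec_eq_0[OF proj_products_carrier v(1) _ one_mem_add_closure_proj_products])
  then show False using v by simp
qed

end

text \<open>Excluding H = \<plusminus>1 makes P and Q, hence all products, nonzero, so that every
  k \<le> m contributes the eigenvalue r k.\<close>

locale nontrivial_involution = involution +
  assumes not_scalar: "\<And>c. H \<noteq> c \<cdot>\<^sub>m 1\<^sub>m d"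
begin

lemma proj_products_nonzero: "(X, k) \<in> proj_products m \<Longrightarrow> has_nonzero_entry X"
proof (induction m arbitrary: X k)
  case 0
  have "(1\<^sub>m 1 :: complex mat) $$ (0, 0) \<noteq> 0" by simp
  with 0 show ?case unfolding has_nonzero_entry_def by fastforce
next
  case (Suc m)
  have "has_nonzero_entry (eig_proj s)" if "s * s = 1" for s
    using scalar_if_eig_proj_zero[OF that] not_scalar by blast
  with Suc show ?case by (auto intro!: has_nonzero_entry_kron)
qed

lemma eigenvalue_smult_proj_spectrum_iff:
  assumes spec: "has_proj_spectrum m Hx r"
  shows "eigenvalue (complex_of_real l \<cdot>\<^sub>m Hx) \<mu> \<longleftrightarrow> (\<exists>k\<le>m. \<mu> = complex_of_real (l * r k))"
proof
  assume "\<exists>k\<le>m. \<mu> = complex_of_real (l * r k)"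
  then obtain k X where \<mu>: "\<mu> = complex_of_real (l * r k)" and mem: "(X, k) \<in> proj_products m"
    using proj_products_exist by blast
  show "eigenvalue (complex_of_real l \<cdot>\<^sub>m Hx) \<mu>"
  proof (rule eigenvalue_if_mult_eigen)
    show "complex_of_real l \<cdot>\<^sub>m Hx \<in> carrier_mat (d^m) (d^m)"
      using spec unfolding has_proj_spectrum_def by simp
    show "X \<in> carrier_mat (d^m) (d^m)" using proj_products_eigen[OF mem] by simp
    show "complex_of_real l \<cdot>\<^sub>m Hx * X = \<mu> \<cdot>\<^sub>m X"
      unfolding \<mu> using smult_mult_proj_product[OF spec mem] by simp
  qed (rule proj_products_nonzero[OF mem])
qed (rule eigenvalue_smult_proj_spectrum[OF spec])

lemma mexp_eq_smult_tpow_iff: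
  assumes spec: "has_proj_spectrum m Hx r"
  shows "mexp (c \<cdot>\<^sub>m Hx) = z \<cdot>\<^sub>m tpow H m \<longleftrightarrow> (\<forall>k\<le>m. exp (c * complex_of_real (r k)) = z * (-1)^k)"
proof
  assume eq: "mexp (c \<cdot>\<^sub>m Hx) = z \<cdot>\<^sub>m tpow H m"
  show "\<forall>k\<le>m. exp (c * complex_of_real (r k)) = z * (-1)^k"
  proof (intro allI impI)
    fix k assume "k \<le> m"
    then obtain X where mem: "(X, k) \<in> proj_products m" using proj_products_exist by blast
    have "exp (c * complex_of_real (r k)) \<cdot>\<^sub>m X = mexp (c \<cdot>\<^sub>m Hx) * X"
      by (rule mexp_smult_mult_proj_product[OF spec mem, symmetric])
    also have "\<dots> = (z * (-1)^k) \<cdot>\<^sub>m X"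
      unfolding eq by (rule tpow_mult_proj_product[OF mem])
    finally have "exp (c * complex_of_real (r k)) \<cdot>\<^sub>m X = (z * (-1)^k) \<cdot>\<^sub>m X" .
    then show "exp (c * complex_of_real (r k)) = z * (-1)^k"
      using proj_products_nonzero[OF mem] by (rule smult_mat_cancel)
  qed
qed (use mexp_eq_smult_tpow[OF spec] in blast)

lemma spread_smult_proj_spectrum:
  assumes spec: "has_proj_spectrum m Hx r" and bound: "\<And>k. k \<le> m \<Longrightarrow> \<bar>r k\<bar> \<le> E"
    and top: "kmax \<le> m" "r kmax = E" and bot: "kmin \<le> m" "r kmin = - E"
  shows "spread (complex_of_real l \<cdot>\<^sub>m Hx) = 2 * \<bar>l\<bar> * E"
proof -
  note eig = eigenvalue_smult_proj_spectrum_iff[OF spec]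
  have lHx: "complex_of_real l \<cdot>\<^sub>m Hx \<in> carrier_mat (d^m) (d^m)"
    using spec unfolding has_proj_spectrum_def by simp
  have top_eig: "eigenvalue (complex_of_real l \<cdot>\<^sub>m Hx) (complex_of_real (l * E))"
    and bot_eig: "eigenvalue (complex_of_real l \<cdot>\<^sub>m Hx) (complex_of_real (l * - E))"
    using eig top bot by metis+
  have "spread (complex_of_real l \<cdot>\<^sub>m Hx) \<le> \<bar>l\<bar> * E - (- \<bar>l\<bar> * E)"
  proof (rule spread_le[OF lHx top_eig])
    fix \<mu> assume "eigenvalue (complex_of_real l \<cdot>\<^sub>m Hx) \<mu>"
    then obtain k where "k \<le> m" "\<mu> = complex_of_real (l * r k)" using eig by blast
    then have "\<bar>Re \<mu>\<bar> \<le> \<bar>l\<bar> * E" using bound by (simp add: abs_mult mult_left_mono)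
    then show "- \<bar>l\<bar> * E \<le> Re \<mu> \<and> Re \<mu> \<le> \<bar>l\<bar> * E" by linarith
  qed
  moreover have "l * E - l * - E \<le> spread (complex_of_real l \<cdot>\<^sub>m Hx)"
    "l * - E - l * E \<le> spread (complex_of_real l \<cdot>\<^sub>m Hx)"
    using spread_ge[OF lHx top_eig bot_eig] spread_ge[OF lHx bot_eig top_eig] by simp_all
  ultimately show ?thesis by (cases "l \<ge> 0") (simp_all add: abs_if algebra_simps)
qed

end

subsection \<open>Implementation times\<close>

lemma pi_le_abs_if_exp_eq_minus_one:
  assumes "exp (\<i> * complex_of_real x) = -1"
  shows "pi \<le> \<bar>x\<bar>"
proof (rule ccontr)
  assume "\<not> pi \<le> \<bar>x\<bar>"
  moreover have "cos \<bar>x\<bar> = cos pi"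
    using arg_cong[OF assms, of Re] by (simp add: Re_exp)
  ultimately show False using cos_inj_pi[of "\<bar>x\<bar>" pi] by simp
qed

lemma impl_time_eqI:
  assumes "t\<^sub>0 \<ge> 0" and "spread (complex_of_real l\<^sub>0 \<cdot>\<^sub>m Hx) \<le> \<tau>"
    and "mexp ((- (\<i> * complex_of_real t\<^sub>0 * complex_of_real l\<^sub>0)) \<cdot>\<^sub>m Hx)
      = exp (\<i> * complex_of_real \<phi>\<^sub>0) \<cdot>\<^sub>m tpow H m"
    and "\<And>t l \<phi>. t \<ge> 0 \<Longrightarrow> spread (complex_of_real l \<cdot>\<^sub>m Hx) \<le> \<tau> \<Longrightarrow>
      mexp ((- (\<i> * complex_of_real t * complex_of_real l)) \<cdot>\<^sub>m Hx)
        = exp (\<i> * complex_of_real \<phi>) \<cdot>\<^sub>m tpow H m \<Longrightarrow> t\<^sub>0 \<le> t"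
  shows "impl_time Hx H m \<tau> = t\<^sub>0"
  unfolding impl_time_def by (rule cInf_eq_minimum) (use assms in blast)+

context involution
begin

lemma impl_time_scalar:
  assumes H: "H = c \<cdot>\<^sub>m 1\<^sub>m d" and Hx: "Hx \<in> carrier_mat (d^m) (d^m)" and "\<tau> > 0"
  shows "impl_time Hx H m \<tau> = 0"
proof -
  have pos: "d^m > 0" using dim_pos by simp
  have "(c \<cdot>\<^sub>m 1\<^sub>m d) * (c \<cdot>\<^sub>m 1\<^sub>m d) = c \<cdot>\<^sub>m (1\<^sub>m d * (c \<cdot>\<^sub>m 1\<^sub>m d))"
    by (rule mult_smult_assoc_mat) auto
  then have "(c * c) \<cdot>\<^sub>m 1\<^sub>m d = 1\<^sub>m d" using H_square unfolding H by (simp add: smult_smult_mat)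
  then have "((c * c) \<cdot>\<^sub>m 1\<^sub>m d) $$ (0, 0) = 1\<^sub>m d $$ (0, 0)" by simp
  then have "c * c = 1" using dim_pos by simp
  then have "c = 1 \<or> c = -1" using power2_eq_1_iff[of c] by (simp add: power2_eq_square)
  then have "c^m = 1 \<or> c^m = -1" by (cases "even m") auto
  then obtain \<phi> :: real where \<phi>: "exp (\<i> * complex_of_real \<phi>) * c^m = 1"
  proof
    assume "c^m = -1"
    then show thesis using that[of pi] by simp
  qed (use that[of 0] in simp)
  have "(0 \<cdot>\<^sub>m Hx) * 1\<^sub>m (d^m) = 0 \<cdot>\<^sub>m 1\<^sub>m (d^m)" using Hx by (intro eq_matI) auto
  then have "mexp (0 \<cdot>\<^sub>m Hx) * 1\<^sub>m (d^m) = exp 0 \<cdot>\<^sub>m 1\<^sub>m (d^m)"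
    using Hx by (intro mexp_mult_eigen[OF _ one_carrier_mat]) auto
  moreover have "mexp (0 \<cdot>\<^sub>m Hx) \<in> carrier_mat (d^m) (d^m)" using Hx by (simp add: mexp_carrier_mat)
  ultimately have "mexp (0 \<cdot>\<^sub>m Hx) = 1\<^sub>m (d^m)" by (simp add: one_smult_mat)
  also have "\<dots> = exp (\<i> * complex_of_real \<phi>) \<cdot>\<^sub>m tpow H m"
    unfolding H tpow_smult tpow_one[OF dim_pos] smult_smult_mat \<phi> by (rule one_smult_mat[symmetric])
  finally show ?thesis
    using assms spread_zero_smult[OF Hx pos] by (intro impl_time_eqI[of 0 0]) auto
qed

end

context nontrivial_involution
begin

lemma pi_le_time_scale_if_mexp_eq_tpow:
  assumes spec: "has_proj_spectrum m Hx r" and m: "m \<ge> 1" and gap: "r 0 = r 1 + 2" and t: "t \<ge> 0"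
    and eq: "mexp ((- (\<i> * complex_of_real t * complex_of_real l)) \<cdot>\<^sub>m Hx)
      = exp (\<i> * complex_of_real \<phi>) \<cdot>\<^sub>m tpow H m"
  shows "pi \<le> 2 * t * \<bar>l\<bar>"
proof -
  define c where "c = - (\<i> * complex_of_real t * complex_of_real l)"
  have phase: "exp (c * complex_of_real (r k)) = exp (\<i> * complex_of_real \<phi>) * (-1)^k" if "k \<le> m" for k
    using eq that unfolding c_def mexp_eq_smult_tpow_iff[OF spec] by blast
  \<comment> \<open>The phases for k = 0 and k = 1 differ by the sign (-1)^k, while r 1 = r 0 - 2.\<close>
  have "exp (c * complex_of_real (r 1)) * exp (2 * c) = exp (c * complex_of_real (r 0))"
    unfolding gap by (simp add: exp_add[symmetric] algebra_simps)
  also have "\<dots> = exp (c * complex_of_real (r 1)) * (-1)"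
    using phase[of 0] phase[of 1] m by simp
  finally have "exp (2 * c) = -1" by (metis exp_not_eq_zero mult_left_cancel)
  moreover have "2 * c = \<i> * complex_of_real (- 2 * t * l)" unfolding c_def by (simp add: algebra_simps)
  ultimately have "exp (\<i> * complex_of_real (- 2 * t * l)) = -1" by (simp only:)
  then have "pi \<le> \<bar>- 2 * t * l\<bar>" by (rule pi_le_abs_if_exp_eq_minus_one)
  then show ?thesis using t by (simp add: abs_mult)
qed

lemma impl_time_proj_spectrum:
  assumes spec: "has_proj_spectrum m Hx r" and bound: "\<And>k. k \<le> m \<Longrightarrow> \<bar>r k\<bar> \<le> E"
    and top: "kmax \<le> m" "r kmax = E" and bot: "kmin \<le> m" "r kmin = - E"
    and E: "E > 0" and m: "m \<ge> 1" and gap: "r 0 = r 1 + 2"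
    and phase: "\<And>k. k \<le> m \<Longrightarrow>
      exp (- (\<i> * complex_of_real (pi / 2)) * complex_of_real (r k)) = exp (\<i> * complex_of_real \<phi>\<^sub>0) * (-1)^k"
    and \<tau>: "\<tau> > 0"
  shows "impl_time Hx H m \<tau> = pi * E / \<tau>"
proof (rule impl_time_eqI)
  note spread = spread_smult_proj_spectrum[OF spec bound top bot]
  show "0 \<le> pi * E / \<tau>" using E \<tau> by simp
  have "spread (complex_of_real (\<tau> / (2 * E)) \<cdot>\<^sub>m Hx) = 2 * \<bar>\<tau> / (2 * E)\<bar> * E"
    by (rule spread)
  then show "spread (complex_of_real (\<tau> / (2 * E)) \<cdot>\<^sub>m Hx) \<le> \<tau>"
    using E \<tau> by simp
  have "pi * E / \<tau> * (\<tau> / (2 * E)) = pi / 2" using E \<tau> by (simp add: field_simps)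
  then have "- (\<i> * complex_of_real (pi * E / \<tau>) * complex_of_real (\<tau> / (2 * E)))
      = - (\<i> * complex_of_real (pi / 2))"
    by (simp only: mult.assoc of_real_mult[symmetric])
  then show "mexp ((- (\<i> * complex_of_real (pi * E / \<tau>) * complex_of_real (\<tau> / (2 * E)))) \<cdot>\<^sub>m Hx)
      = exp (\<i> * complex_of_real \<phi>\<^sub>0) \<cdot>\<^sub>m tpow H m"
    using phase by (simp only: mexp_eq_smult_tpow_iff[OF spec]) blast
  fix t l \<phi>
  assume t: "t \<ge> 0" and "spread (complex_of_real l \<cdot>\<^sub>m Hx) \<le> \<tau>"
    and "mexp ((- (\<i> * complex_of_real t * complex_of_real l)) \<cdot>\<^sub>m Hx)
      = exp (\<i> * complex_of_real \<phi>) \<cdot>\<^sub>m tpow H m"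
  then have scale: "2 * \<bar>l\<bar> * E \<le> \<tau>" and "pi \<le> 2 * t * \<bar>l\<bar>"
    using pi_le_time_scale_if_mexp_eq_tpow[OF spec m gap t] by (simp_all add: spread)
  then have "pi * E \<le> 2 * t * \<bar>l\<bar> * E" using E by (intro mult_right_mono) auto
  also have "\<dots> = t * (2 * \<bar>l\<bar> * E)" by simp
  also have "\<dots> \<le> t * \<tau>" using scale t by (intro mult_left_mono)
  finally show "pi * E / \<tau> \<le> t" using \<tau> by (simp add: pos_divide_le_eq)
qed

lemma impl_time_H_par:
  assumes "m \<ge> 1" "\<tau> > 0"
  shows "impl_time (H_par H m) H m \<tau> = pi * real m / \<tau>"
proof (rule impl_time_proj_spectrum[OF has_proj_spectrum_H_par])
  fix k assume "k \<le> m"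
  have "- (\<i> * complex_of_real (pi / 2)) * complex_of_real (real m - 2 * real k)
      = \<i> * complex_of_real (- (pi * real m / 2)) + of_nat k * (\<i> * complex_of_real pi)"
    by (simp add: algebra_simps)
  then show "exp (- (\<i> * complex_of_real (pi / 2)) * complex_of_real (real m - 2 * real k))
      = exp (\<i> * complex_of_real (- (pi * real m / 2))) * (-1)^k"
    by (simp only: exp_add exp_of_nat_mult exp_pi_i')
qed (use assms in auto)

lemma impl_time_tpow:
  assumes "m \<ge> 1" "\<tau> > 0"
  shows "impl_time (tpow H m) H m \<tau> = pi / \<tau>"
proof -
  have "exp (- (\<i> * complex_of_real (pi / 2)) * complex_of_real ((-1)^k))
      = exp (\<i> * complex_of_real (- (pi / 2))) * (-1)^k" for k :: nat
  proof (cases "even k")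
    case False
    then have minus_one: "((-1)^k :: real) = -1" "((-1)^k :: complex) = -1" by simp_all
    have "- (\<i> * complex_of_real (pi / 2)) * complex_of_real (-1)
        = \<i> * complex_of_real (- (pi / 2)) + \<i> * complex_of_real pi"
      by (simp add: algebra_simps)
    then have "exp (- (\<i> * complex_of_real (pi / 2)) * complex_of_real (-1))
        = exp (\<i> * complex_of_real (- (pi / 2))) * (-1)"
      by (simp only: exp_add exp_pi_i')
    then show ?thesis unfolding minus_one .
  qed simp
  then have "impl_time (tpow H m) H m \<tau> = pi * 1 / \<tau>"
    by (intro impl_time_proj_spectrum[OF has_proj_spectrum_tpow,
          where E=1 and kmax=0 and kmin=1 and \<phi>\<^sub>0="- (pi / 2)"])
      (use assms in auto)
  then show ?thesis by simp
qed

end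

theorem mainTheorem2:
  fixes H :: "complex mat" and d m :: nat and \<tau> :: real
  assumes "d \<ge> 1" and "H \<in> carrier_mat d d"
    and "hermitian_mat H" and "unitary_mat H"
    and "m \<ge> 1" and "\<tau> > 0"
  shows "impl_time (H_par H m) H m \<tau> = real m * impl_time (H_coh H m) H m \<tau>"
proof -
  interpret involution H d
    using assms(1-4) hermitian_unitary_square by unfold_locales auto
  show ?thesis
  proof (cases "\<exists>c. H = c \<cdot>\<^sub>m 1\<^sub>m d")
    case True
    then obtain c where "H = c \<cdot>\<^sub>m 1\<^sub>m d" by blast
    then show ?thesis
      unfolding H_coh_def using impl_time_scalar H_par_carrier_mat[OF H_carrier]
        tpow_carrier_mat[OF H_carrier] assms(6) by simp
  next
    case False
    then interpret nontrivial_involution H d by unfold_locales blast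
    show ?thesis unfolding H_coh_def using impl_time_H_par impl_time_tpow assms(5,6) by simp
  qed
qed

end
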